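(* Let $I\subset\mathbb{R}$ be an interval, let $(a_i)_{i\ge1}$ be a real sequence with all $a_i\in I$, and let $\psi:I\to\mathbb{R}$ be a non-decreasing convex function. Then $T_a\subset T_{\psi(a)}$, where $\psi(a)=(\psi(a_i))_{i\ge1}$.
   Context: For a real sequence $(x_i)$, $\Delta x_i=x_{i+1}-x_i$. "Increasing" means strictly increasing. For a real sequence $a=(a_i)$, $T_a$ denotes the set of increasing real sequences $t=(t_i)$ with the same index set such that $(\Delta a_i/\Delta t_i)$ is non-decreasing. *)

theory Defs
  imports "HOL-Analysis.Analysis"
begin

text \<open>Sequences are indexed by i \<ge> 1 and modelled as functions nat \<Rightarrow> real;
  the value at index 0 is ignored.\<close>

definition fwd_diff :: "(nat \<Rightarrow> real) \<Rightarrow> nat \<Rightarrow> real" ("\<Delta>") where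
  "\<Delta> x i = x (Suc i) - x i"

definition T_set :: "(nat \<Rightarrow> real) \<Rightarrow> (nat \<Rightarrow> real) set" where
  "T_set a = {t. (\<forall>i\<ge>1. t i < t (Suc i)) \<and>
                 (\<forall>i\<ge>1. \<Delta> a i / \<Delta> t i \<le> \<Delta> a (Suc i) / \<Delta> t (Suc i))}"

end

theory Submission
  imports Defs
begin

text \<open>Write each increment of \<open>\<psi> \<circ> a\<close> as a slope of \<open>\<psi>\<close> times the increment of \<open>a\<close>.
  If \<open>a\<close> moves monotonically over two consecutive steps, convexity orders the two slopes
  and monotonicity makes them nonnegative, so the ordered ratios \<open>\<Delta>a/\<Delta>t\<close> stay ordered
  after multiplication by them. Otherwise the ordering of the ratios forces \<open>a\<close> to turn
  upward, and monotonicity alone puts a nonpositive increment of \<open>\<psi> \<circ> a\<close> before a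
  nonnegative one.\<close>

lemma convex_on_slope_mono:
  fixes f :: "real \<Rightarrow> real"
  assumes "convex_on I f" "x \<in> I" "z \<in> I" "x < y" "y < z"
  shows "(f y - f x) / (y - x) \<le> (f z - f y) / (z - y)"
proof -
  have "(f x - f y) / (x - y) \<le> (f y - f z) / (y - z)"
    using convex_on_slope_le[OF assms] by linarith
  then show ?thesis
    by (metis minus_diff_eq minus_divide_divide)
qed

lemma mono_on_slope_nonneg:
  fixes f :: "real \<Rightarrow> real"
  assumes "mono_on I f" "x \<in> I" "y \<in> I"
  shows "0 \<le> (f y - f x) / (y - x)"
proof (cases "x \<le> y")
  case True
  then show ?thesis
    using mono_onD[OF assms] by simp
next
  case False
  then show ?thesis
    using mono_onD[OF assms(1,3,2)] by (simp add: divide_nonpos_neg)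
qed

lemma mono_convex_on_scaled_diff_le:
  fixes f :: "real \<Rightarrow> real"
  assumes mono: "mono_on I f" and convex: "convex_on I f"
    and I: "x \<in> I" "y \<in> I" "z \<in> I"
    and pos: "h > 0" "k > 0"
    and le: "(y - x) / h \<le> (z - y) / k"
  shows "(f y - f x) / h \<le> (f z - f y) / k"
proof -
  define s r where "s = (y - x) / h" and "r = (z - y) / k"
  define \<sigma>\<^sub>1 \<sigma>\<^sub>2 where "\<sigma>\<^sub>1 = (f y - f x) / (y - x)" and "\<sigma>\<^sub>2 = (f z - f y) / (z - y)"
  have "0 \<le> \<sigma>\<^sub>1" "0 \<le> \<sigma>\<^sub>2"
    unfolding \<sigma>\<^sub>1_def \<sigma>\<^sub>2_def using mono I by (auto intro: mono_on_slope_nonneg)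
  have lhs: "(f y - f x) / h = \<sigma>\<^sub>1 * s" if "x \<noteq> y"
    using that pos unfolding \<sigma>\<^sub>1_def s_def by (simp add: divide_simps)
  have rhs: "(f z - f y) / k = \<sigma>\<^sub>2 * r" if "y \<noteq> z"
    using that pos unfolding \<sigma>\<^sub>2_def r_def by (simp add: divide_simps)
  have "s \<le> r"
    using le by (simp add: s_def r_def)
  consider "s \<le> 0" "0 \<le> r" | "0 < s" | "r < 0"
    by linarith
  then show ?thesis
  proof cases
    case 1
    then have "y \<le> x" "y \<le> z"
      using pos by (simp_all add: s_def r_def divide_le_0_iff zero_le_divide_iff)
    then have "f y \<le> f x" "f y \<le> f z"
      using mono I by (auto intro: mono_onD)
    then have "(f y - f x) / h \<le> 0" "0 \<le> (f z - f y) / k"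
      using pos by (simp_all add: divide_nonpos_pos)
    then show ?thesis
      by linarith
  next
    case 2
    then have "0 < r"
      using \<open>s \<le> r\<close> by linarith
    with 2 have "x < y" "y < z"
      using pos by (simp_all add: s_def r_def zero_less_divide_iff)
    then have "\<sigma>\<^sub>1 \<le> \<sigma>\<^sub>2"
      unfolding \<sigma>\<^sub>1_def \<sigma>\<^sub>2_def using convex I by (intro convex_on_slope_mono)
    then have "\<sigma>\<^sub>1 * s \<le> \<sigma>\<^sub>2 * r"
      using \<open>s \<le> r\<close> \<open>0 \<le> \<sigma>\<^sub>2\<close> 2 by (intro mult_mono) auto
    then show ?thesis
      using lhs rhs \<open>x < y\<close> \<open>y < z\<close> by simp
  next
    case 3
    then have "s < 0"
      using \<open>s \<le> r\<close> by linarith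
    with 3 have "z < y" "y < x"
      using pos by (simp_all add: s_def r_def divide_less_0_iff)
    then have "(f y - f z) / (y - z) \<le> (f x - f y) / (x - y)"
      using convex I by (intro convex_on_slope_mono)
    then have "\<sigma>\<^sub>2 \<le> \<sigma>\<^sub>1"
      unfolding \<sigma>\<^sub>1_def \<sigma>\<^sub>2_def by (metis minus_diff_eq minus_divide_divide)
    then have "\<sigma>\<^sub>2 * - r \<le> \<sigma>\<^sub>1 * - s"
      using \<open>s \<le> r\<close> \<open>0 \<le> \<sigma>\<^sub>1\<close> 3 by (intro mult_mono) auto
    then show ?thesis
      using lhs rhs \<open>z < y\<close> \<open>y < x\<close> by simp
  qed
qed

theorem corollary3p2:
  fixes I :: "real set" and a :: "nat \<Rightarrow> real" and \<psi> :: "real \<Rightarrow> real"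
  assumes "is_interval I"
    and "\<forall>i\<ge>1. a i \<in> I"
    and "mono_on I \<psi>"
    and "convex_on I \<psi>"
  shows "T_set a \<subseteq> T_set (\<lambda>i. \<psi> (a i))"
proof
  fix t
  assume "t \<in> T_set a"
  then have inc: "\<forall>i\<ge>1. t i < t (Suc i)"
    and ratios: "\<forall>i\<ge>1. \<Delta> a i / \<Delta> t i \<le> \<Delta> a (Suc i) / \<Delta> t (Suc i)"
    by (auto simp: T_set_def)
  have "\<Delta> (\<lambda>i. \<psi> (a i)) i / \<Delta> t i \<le> \<Delta> (\<lambda>i. \<psi> (a i)) (Suc i) / \<Delta> t (Suc i)"
    if "i \<ge> 1" for i
    using mono_convex_on_scaled_diff_le[OF assms(3,4), of "a i" "a (Suc i)" "a (Suc (Suc i))"]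
      assms(2) inc ratios that
    by (simp add: fwd_diff_def)
  with inc show "t \<in> T_set (\<lambda>i. \<psi> (a i))"
    by (auto simp: T_set_def)
qed

end
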